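(* For all $n\in\mathbb N$ the following holds in the $q$-shuffle algebra $\mathbb V$: $$0=\sum_{i=0}^n(-1)^i[2n-i]_q\,C_i\star\tilde G_{n-i}.$$
   Context: Let $\mathbb F$ be a field and let $q\in\mathbb F$ be nonzero and not a root of unity. Let $[m]_q=(q^m-q^{-m})/(q-q^{-1})$ for $m\in\mathbb Z$. Let $\mathbb V$ be the free associative $\mathbb F$-algebra on noncommuting $x,y$, with basis the words (including $1$). Juxtaposition denotes concatenation. Set $\langle x,x\rangle=\langle y,y\rangle=2$ and $\langle x,y\rangle=\langle y,x\rangle=-2$. The $q$-shuffle product $\star$ is the bilinear product determined as follows: - $1\star v=v\star 1=v$; - for nontrivial words $u=u_1\cdots u_r$ and $v=v_1\cdots v_s$, $$u\star v=u_1((u_2\cdots u_r)\star v)+v_1(u\star(v_2\cdots v_s))q^{\langle u_1,v_1\rangle+\cdots+\langle u_r,v_1\rangle}.$$ This makes $\mathbb V$ an associative algebra, the $q$-shuffle algebra. For $k\in\mathbb N$, let $\tilde G_k=xyxy\cdots xy$ be the word of length $2k$, with $\tilde G_0=1$. Let $\overline x=1$ and $\overline y=-1$. A word $v_1\cdots v_m$ is Catalan if $\overline v_1+\cdots+\overline v_i\ge0$ for $1\le i\le m-1$ and $\overline v_1+\cdots+\overline v_m=0$. For $n\in\mathbb N$, $$C_n=\sum v_1\cdots v_{2n}\,[1]_q[1+\overline v_1]_q\cdots[1+\overline v_1+\cdots+\overline v_{2n}]_q,$$ where the sum is over Catalan words of length $2n$ (so $C_0=1$). *)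

theory Defs
  imports Complex_Main "HOL-Library.Poly_Mapping"
begin

text \<open>Letters x, y; words are lists of letters; the free algebra V is the space of
  finitely supported F-valued functions on words (basis = words).\<close>

datatype letter = X | Y

type_synonym word = "letter list"

type_synonym 'a vv = "word \<Rightarrow>\<^sub>0 'a"

fun bform :: "letter \<Rightarrow> letter \<Rightarrow> int" where
  "bform X X = 2"
| "bform Y Y = 2"
| "bform X Y = -2"
| "bform Y X = -2"

definition smul :: "'a::field \<Rightarrow> 'a vv \<Rightarrow> 'a vv" where
  "smul c p = Poly_Mapping.map (\<lambda>t. c * t) p"

definition prep :: "letter \<Rightarrow> 'a::field vv \<Rightarrow> 'a vv" where
  "prep a p = (\<Sum>w\<in>Poly_Mapping.keys p. Poly_Mapping.single (a # w) (Poly_Mapping.lookup p w))"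

function wsh :: "'a::field \<Rightarrow> word \<Rightarrow> word \<Rightarrow> 'a vv" where
  "wsh q [] v = Poly_Mapping.single v 1"
| "wsh q (a # u) [] = Poly_Mapping.single (a # u) 1"
| "wsh q (a # u) (b # v) =
     prep a (wsh q u (b # v))
     + smul (q powi (sum_list (map (\<lambda>c. bform c b) (a # u)))) (prep b (wsh q (a # u) v))"
  by pat_completeness auto
termination
  by (relation "measure (\<lambda>(q, u, v). length u + length v)") auto

definition qstar :: "'a::field \<Rightarrow> 'a vv \<Rightarrow> 'a vv \<Rightarrow> 'a vv" where
  "qstar q f g = (\<Sum>u\<in>Poly_Mapping.keys f. \<Sum>v\<in>Poly_Mapping.keys g. smul (Poly_Mapping.lookup f u * Poly_Mapping.lookup g v) (wsh q u v))"

definition qint :: "'a::field \<Rightarrow> int \<Rightarrow> 'a" where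
  "qint q m = (q powi m - q powi (- m)) / (q - inverse q)"

definition Gt :: "nat \<Rightarrow> word" where
  "Gt k = concat (replicate k [X, Y])"

definition bar :: "letter \<Rightarrow> int" where
  "bar c = (if c = X then 1 else -1)"

definition psum :: "word \<Rightarrow> nat \<Rightarrow> int" where
  "psum w i = sum_list (map bar (take i w))"

definition catalan :: "word \<Rightarrow> bool" where
  "catalan w \<longleftrightarrow> (\<forall>i\<in>{1..<length w}. psum w i \<ge> 0) \<and> psum w (length w) = 0"

definition Cn :: "'a::field \<Rightarrow> nat \<Rightarrow> 'a vv" where
  "Cn q n = (\<Sum>w\<in>{w. length w = 2 * n \<and> catalan w}.
               Poly_Mapping.single w (\<Prod>i\<in>{0..2 * n}. qint q (1 + psum w i)))"

end

theory Submission
  imports Defs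
begin

text \<open>Let D(h,j) (catalan_elem q h j) be the sum of the words of length h + 2j which, read
  as lattice paths with steps x = up and y = down, start at height h, stay weakly above 0 and
  end at 0, each weighted by the product of the q-integers [1 + height] along the path; thus
  C_j = D(0,j). The coefficient of a word a w in D(h,j) * G_k or in D(h,j) * y G_k is computed
  from its first letter a: either a comes from the path, which changes h, or it is the first
  letter of the other factor, and then the shuffle rule contributes a power q^(2h) or q^(-2h),
  since every path of D(h,j) has total height -h.
  Stripping the first letter therefore maps an alternating sum (coeff_comb) over j of
  (-1)^j (A_j <w, D(H,j) * G_(M-j)> + B_j <w, D(H-1,j) * y G_(M-j)>)
  to sums of the same shape with new coefficients. Two explicit families of coefficients are
  closed under this operation up to q-integer identities and the nonzero factor [H+2], and they
  vanish on the empty word, so they vanish on every word. For H = 0 the first family is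
  A_j = (q - q^(-1)) [2n - j], which is the theorem.\<close>

section \<open>Coefficients of the q-shuffle product\<close>

lemma lookup_smul [simp]: "Poly_Mapping.lookup (smul c p) w = c * Poly_Mapping.lookup p w"
  by (simp add: smul_def Poly_Mapping.map.rep_eq when_def)

lemma lookup_prep_Nil [simp]: "Poly_Mapping.lookup (prep a p) [] = 0"
  by (simp add: prep_def lookup_sum lookup_single when_def)

lemma lookup_prep_Cons [simp]:
  "Poly_Mapping.lookup (prep a p) (b # w) = (if a = b then Poly_Mapping.lookup p w else 0)"
proof -
  have "Poly_Mapping.lookup (prep a p) (b # w) =
    (\<Sum>v\<in>Poly_Mapping.keys p. if v = w \<and> a = b then Poly_Mapping.lookup p v else 0)"
    by (simp add: prep_def lookup_sum lookup_single when_def) metis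
  also have "\<dots> = (if a = b then Poly_Mapping.lookup p w else 0)"
    by (auto simp: sum.delta in_keys_iff)
  finally show ?thesis .
qed

lemma bar_X [simp]: "bar X = 1" and bar_Y [simp]: "bar Y = -1"
  by (simp_all add: bar_def)

definition word_height :: "word \<Rightarrow> int" where
  "word_height w = sum_list (map bar w)"

lemma word_height_simps [simp]:
  "word_height [] = 0" "word_height (a # w) = bar a + word_height w"
  by (simp_all add: word_height_def)

lemma sum_bform_eq_word_height: "sum_list (map (\<lambda>c. bform c b) u) = 2 * bar b * word_height u"
proof -
  have "bform c b = 2 * bar c * bar b" for c
    by (cases c; cases b) (simp_all add: bar_def)
  then show ?thesis
    by (induction u) (simp_all add: algebra_simps)
qed

lemma wsh_Nil_right [simp]: "wsh q u [] = Poly_Mapping.single u 1"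
  by (cases u) simp_all

lemma lookup_wsh_Nil: "Poly_Mapping.lookup (wsh q u v) [] = (if u = [] \<and> v = [] then 1 else 0)"
  by (cases "(q, u, v)" rule: wsh.cases) (auto simp: lookup_single when_def lookup_add)

lemma lookup_wsh_Cons:
  "Poly_Mapping.lookup (wsh q u v) (a # w) =
     (case u of [] \<Rightarrow> 0 | b # u' \<Rightarrow> if b = a then Poly_Mapping.lookup (wsh q u' v) w else 0)
   + (case v of [] \<Rightarrow> 0
      | b # v' \<Rightarrow> if b = a then q powi (2 * bar a * word_height u) * Poly_Mapping.lookup (wsh q u v') w
                  else 0)"
  by (cases u; cases v; simp only: wsh.simps wsh_Nil_right sum_bform_eq_word_height list.case)
    (auto simp: lookup_single when_def lookup_add algebra_simps)

lemma finite_words_length: "finite {w :: word. length w = n}"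
proof -
  have letters: "(UNIV :: letter set) = {X, Y}"
    using letter.exhaust by auto
  have "finite {w :: word. set w \<subseteq> UNIV \<and> length w = n}"
    by (intro finite_lists_length_eq) (simp add: letters)
  then show ?thesis by simp
qed

definition lquot :: "letter \<Rightarrow> 'a::zero vv \<Rightarrow> 'a vv" where
  "lquot a f = Abs_poly_mapping (\<lambda>w. Poly_Mapping.lookup f (a # w))"

lemma lookup_lquot [simp]: "Poly_Mapping.lookup (lquot a f) w = Poly_Mapping.lookup f (a # w)"
proof -
  have "{w. Poly_Mapping.lookup f (a # w) \<noteq> 0} = Cons a -` {v. Poly_Mapping.lookup f v \<noteq> 0}"
    by auto
  then have "finite {w. Poly_Mapping.lookup f (a # w) \<noteq> 0}"
    by (metis finite_lookup finite_vimageI inj_on_Cons1)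
  then show ?thesis by (simp add: lquot_def)
qed

definition pairing :: "'a::comm_semiring_0 vv \<Rightarrow> (word \<Rightarrow> 'a) \<Rightarrow> 'a" where
  "pairing f \<phi> = (\<Sum>u\<in>Poly_Mapping.keys f. Poly_Mapping.lookup f u * \<phi> u)"

lemma pairing_superset:
  assumes "finite S" "Poly_Mapping.keys f \<subseteq> S"
  shows "pairing f \<phi> = (\<Sum>u\<in>S. Poly_Mapping.lookup f u * \<phi> u)"
  unfolding pairing_def using assms by (intro sum.mono_neutral_left) (auto simp: in_keys_iff)

lemma pairing_add: "pairing f (\<lambda>u. \<phi> u + \<psi> u) = pairing f \<phi> + pairing f \<psi>"
  by (simp add: pairing_def sum.distrib algebra_simps)

lemma pairing_cmult: "pairing f (\<lambda>u. c * \<phi> u) = c * pairing f \<phi>"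
  by (simp add: pairing_def sum_distrib_left algebra_simps)

lemma pairing_cong:
  "(\<And>u. u \<in> Poly_Mapping.keys f \<Longrightarrow> \<phi> u = \<psi> u) \<Longrightarrow> pairing f \<phi> = pairing f \<psi>"
  by (simp add: pairing_def)

lemma pairing_zero_fun [simp]: "pairing f (\<lambda>u. 0) = 0"
  by (simp add: pairing_def)

lemma pairing_zero [simp]: "pairing 0 \<phi> = 0"
  by (simp add: pairing_def)

lemma pairing_smul [simp]: "pairing (smul c f) \<phi> = c * pairing f \<phi>"
proof -
  have "pairing (smul c f) \<phi> = (\<Sum>u\<in>Poly_Mapping.keys f. Poly_Mapping.lookup (smul c f) u * \<phi> u)"
    by (rule pairing_superset) (auto simp: in_keys_iff)
  then show ?thesis by (simp add: pairing_def sum_distrib_left algebra_simps)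
qed

lemma lookup_qstar_single:
  "Poly_Mapping.lookup (qstar q f (Poly_Mapping.single v 1)) w =
     pairing f (\<lambda>u. Poly_Mapping.lookup (wsh q u v) w)"
  by (simp add: qstar_def lookup_sum pairing_def)

lemma pairing_first_letter:
  "pairing f \<phi> = Poly_Mapping.lookup f [] * \<phi> []
     + pairing (lquot X f) (\<lambda>u. \<phi> (X # u)) + pairing (lquot Y f) (\<lambda>u. \<phi> (Y # u))"
proof -
  let ?KX = "Poly_Mapping.keys (lquot X f)" and ?KY = "Poly_Mapping.keys (lquot Y f)"
  let ?g = "\<lambda>u. Poly_Mapping.lookup f u * \<phi> u"
  have keys_lquot: "Poly_Mapping.keys (lquot a f) = {u. a # u \<in> Poly_Mapping.keys f}" for a
    by (auto simp: in_keys_iff)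
  have "Poly_Mapping.keys f \<subseteq> {[]} \<union> Cons X ` ?KX \<union> Cons Y ` ?KY"
  proof
    fix u assume "u \<in> Poly_Mapping.keys f"
    then show "u \<in> {[]} \<union> Cons X ` ?KX \<union> Cons Y ` ?KY"
      by (cases u) (auto simp: keys_lquot intro: letter.exhaust)
  qed
  then have "pairing f \<phi> = sum ?g ({[]} \<union> Cons X ` ?KX \<union> Cons Y ` ?KY)"
    by (intro pairing_superset) auto
  also have "\<dots> = sum ?g ({[]} \<union> Cons X ` ?KX) + sum ?g (Cons Y ` ?KY)"
    by (intro sum.union_disjoint) auto
  also have "sum ?g ({[]} \<union> Cons X ` ?KX) = sum ?g {[]} + sum ?g (Cons X ` ?KX)"
    by (intro sum.union_disjoint) auto
  also have "sum ?g (Cons X ` ?KX) = pairing (lquot X f) (\<lambda>u. \<phi> (X # u))"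
    by (simp add: sum.reindex pairing_def)
  also have "sum ?g (Cons Y ` ?KY) = pairing (lquot Y f) (\<lambda>u. \<phi> (Y # u))"
    by (simp add: sum.reindex pairing_def)
  finally show ?thesis by simp
qed

section \<open>Dyck paths and the elements D(h,j)\<close>

fun dyck :: "int \<Rightarrow> word \<Rightarrow> bool" where
  "dyck h [] \<longleftrightarrow> h = 0"
| "dyck h (a # w) \<longleftrightarrow> 0 \<le> h \<and> dyck (h + bar a) w"

fun dyck_weight :: "'a::field \<Rightarrow> int \<Rightarrow> word \<Rightarrow> 'a" where
  "dyck_weight q h [] = qint q (1 + h)"
| "dyck_weight q h (a # w) = qint q (1 + h) * dyck_weight q (h + bar a) w"

lemma dyck_nonneg: "dyck h w \<Longrightarrow> 0 \<le> h"
  by (cases w) auto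

lemma dyck_le_length: "dyck h w \<Longrightarrow> h \<le> int (length w)"
proof (induction w arbitrary: h)
  case (Cons a w)
  then show ?case by (cases a) fastforce+
qed simp

lemma dyck_word_height: "dyck h w \<Longrightarrow> h + word_height w = 0"
proof (induction w arbitrary: h)
  case (Cons a w)
  then have "h + bar a + word_height w = 0" by simp
  then show ?case by simp
qed simp

lemma dyck_iff_psum:
  "dyck h w \<longleftrightarrow> (\<forall>i\<le>length w. 0 \<le> h + psum w i) \<and> h + psum w (length w) = 0"
proof (induction w arbitrary: h)
  case (Cons a w)
  have "(\<forall>i\<le>length (a # w). 0 \<le> h + psum (a # w) i) \<longleftrightarrow>
        0 \<le> h + psum (a # w) 0 \<and> (\<forall>i\<le>length w. 0 \<le> h + psum (a # w) (Suc i))"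
    unfolding less_Suc_eq_le[symmetric] length_Cons by (rule All_less_Suc2)
  then have "(\<forall>i\<le>length (a # w). 0 \<le> h + psum (a # w) i) \<longleftrightarrow>
        0 \<le> h \<and> (\<forall>i\<le>length w. 0 \<le> h + bar a + psum w i)"
    by (simp add: psum_def add.assoc)
  then show ?case
    using Cons.IH[of "h + bar a"] by (auto simp: psum_def add.assoc)
qed (auto simp: psum_def)

lemma catalan_iff_dyck: "catalan w \<longleftrightarrow> dyck 0 w"
proof -
  have "0 \<le> psum w i"
    if "\<forall>i\<in>{1..<length w}. 0 \<le> psum w i" "psum w (length w) = 0" "i \<le> length w" for i
    using that by (cases "i = 0 \<or> i = length w") (auto simp: psum_def)
  then show ?thesis
    unfolding catalan_def dyck_iff_psum by auto
qed

lemma prod_qint_psum: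
  "(\<Prod>i\<in>{0..length w}. qint q (1 + h + psum w i)) = dyck_weight q h w"
proof (induction w arbitrary: h)
  case (Cons a w)
  have "(\<Prod>i\<in>{0..Suc (length w)}. qint q (1 + h + psum (a # w) i))
     = qint q (1 + h) * (\<Prod>i\<in>{0..length w}. qint q (1 + (h + bar a) + psum w i))"
    unfolding prod.atLeast0_atMost_Suc_shift by (simp add: psum_def add.assoc)
  then show ?case using Cons.IH[of "h + bar a"] by simp
qed (simp add: psum_def)

definition catalan_elem :: "'a::field \<Rightarrow> nat \<Rightarrow> nat \<Rightarrow> 'a vv" where
  "catalan_elem q h j = Abs_poly_mapping
     (\<lambda>w. if length w = h + 2 * j \<and> dyck (int h) w then dyck_weight q (int h) w else 0)"

lemma lookup_catalan_elem:
  "Poly_Mapping.lookup (catalan_elem q h j) w =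
     (if length w = h + 2 * j \<and> dyck (int h) w then dyck_weight q (int h) w else 0)"
proof -
  have "finite {w. (if length w = h + 2 * j \<and> dyck (int h) w then dyck_weight q (int h) w else 0) \<noteq> 0}"
    by (rule finite_subset[OF _ finite_words_length[of "h + 2 * j"]]) (auto split: if_splits)
  then show ?thesis by (simp add: catalan_elem_def)
qed

lemma Cn_eq_catalan_elem: "Cn q i = catalan_elem q 0 i"
proof (rule poly_mapping_eqI)
  fix w
  let ?S = "{w. length w = 2 * i \<and> catalan w}"
  have "finite ?S"
    by (rule finite_subset[OF _ finite_words_length[of "2 * i"]]) auto
  then have "Poly_Mapping.lookup (Cn q i) w =
      (if w \<in> ?S then \<Prod>k\<in>{0..2 * i}. qint q (1 + psum w k) else 0)"
    by (simp add: Cn_def lookup_sum lookup_single when_def sum.delta')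
  also have "\<dots> = Poly_Mapping.lookup (catalan_elem q 0 i) w"
  proof (cases "w \<in> ?S")
    case True
    then show ?thesis
      using prod_qint_psum[where q = q and h = 0 and w = w]
      by (simp add: lookup_catalan_elem catalan_iff_dyck)
  qed (auto simp: lookup_catalan_elem catalan_iff_dyck)
  finally show "Poly_Mapping.lookup (Cn q i) w = Poly_Mapping.lookup (catalan_elem q 0 i) w" .
qed

lemma word_height_catalan_elem:
  "u \<in> Poly_Mapping.keys (catalan_elem q h j) \<Longrightarrow> word_height u = - int h"
  using dyck_word_height by (force simp: in_keys_iff lookup_catalan_elem split: if_splits)

lemma lookup_catalan_elem_Nil:
  "Poly_Mapping.lookup (catalan_elem q h j) [] = (if h = 0 \<and> j = 0 then qint q 1 else 0)"
  by (auto simp: lookup_catalan_elem)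

lemma lquot_X_catalan_elem:
  "lquot X (catalan_elem q h j) =
     (if j > 0 then smul (qint q (1 + int h)) (catalan_elem q (h + 1) (j - 1)) else 0)"
proof (rule poly_mapping_eqI)
  fix w
  have "\<not> (length w + 1 = h \<and> dyck (int h + 1) w)"
    using dyck_le_length[of "int h + 1" w] by auto
  then show "Poly_Mapping.lookup (lquot X (catalan_elem q h j)) w =
      Poly_Mapping.lookup (if j > 0 then smul (qint q (1 + int h)) (catalan_elem q (h + 1) (j - 1)) else 0) w"
    by (auto simp: lookup_catalan_elem add.commute)
qed

lemma lquot_Y_catalan_elem:
  "lquot Y (catalan_elem q h j) =
     (if h > 0 then smul (qint q (1 + int h)) (catalan_elem q (h - 1) j) else 0)"
proof (rule poly_mapping_eqI)
  fix w
  show "Poly_Mapping.lookup (lquot Y (catalan_elem q h j)) w =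
      Poly_Mapping.lookup (if h > 0 then smul (qint q (1 + int h)) (catalan_elem q (h - 1) j) else 0) w"
  proof (cases "h > 0")
    case True
    then have "int h - 1 = int (h - 1)" "Suc (length w) = h + 2 * j \<longleftrightarrow> length w = h - 1 + 2 * j"
      by auto
    then show ?thesis
      using True by (simp add: lookup_catalan_elem)
  next
    case False
    then have "\<not> dyck (int h - 1) w"
      using dyck_nonneg[of "-1" w] by force
    then show ?thesis
      using False by (simp add: lookup_catalan_elem)
  qed
qed

section \<open>Recurrences for the coefficients of D(h,j) * G_k\<close>

lemma pairing_wsh_Cons:
  "pairing f (\<lambda>u. Poly_Mapping.lookup (wsh q u v) (a # w)) =
     pairing (lquot a f) (\<lambda>u. Poly_Mapping.lookup (wsh q u v) w)
   + (case v of [] \<Rightarrow> 0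
      | b # v' \<Rightarrow> if b = a
                  then pairing f (\<lambda>u. q powi (2 * bar a * word_height u) * Poly_Mapping.lookup (wsh q u v') w)
                  else 0)"
proof -
  have "pairing f (\<lambda>u. case u of [] \<Rightarrow> 0 | b # u' \<Rightarrow> if b = a then Poly_Mapping.lookup (wsh q u' v) w else 0)
     = pairing (lquot a f) (\<lambda>u. Poly_Mapping.lookup (wsh q u v) w)"
    by (subst pairing_first_letter) (cases a; simp)
  moreover have "pairing f (\<lambda>u. case v of [] \<Rightarrow> 0 | b # v' \<Rightarrow>
        if b = a then q powi (2 * bar a * word_height u) * Poly_Mapping.lookup (wsh q u v') w else 0)
     = (case v of [] \<Rightarrow> 0 | b # v' \<Rightarrow>
        if b = a then pairing f (\<lambda>u. q powi (2 * bar a * word_height u) * Poly_Mapping.lookup (wsh q u v') w)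
        else 0)"
    by (cases v) simp_all
  ultimately show ?thesis
    by (simp only: lookup_wsh_Cons pairing_add)
qed

lemma pairing_catalan_elem_powi_height:
  "pairing (catalan_elem q h j) (\<lambda>u. q powi (c * word_height u) * \<psi> u) =
     q powi (- c * int h) * pairing (catalan_elem q h j) \<psi>"
  by (simp add: pairing_cong[where \<psi> = "\<lambda>u. q powi (- c * int h) * \<psi> u"]
      word_height_catalan_elem pairing_cmult)

definition coeff_CG :: "'a::field \<Rightarrow> nat \<Rightarrow> nat \<Rightarrow> nat \<Rightarrow> word \<Rightarrow> 'a" where
  "coeff_CG q h j k w =
     Poly_Mapping.lookup (qstar q (catalan_elem q h j) (Poly_Mapping.single (Gt k) 1)) w"

definition coeff_CYG :: "'a::field \<Rightarrow> nat \<Rightarrow> nat \<Rightarrow> nat \<Rightarrow> word \<Rightarrow> 'a" where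
  "coeff_CYG q h j k w =
     Poly_Mapping.lookup (qstar q (catalan_elem q h j) (Poly_Mapping.single (Y # Gt k) 1)) w"

lemma Gt_0 [simp]: "Gt 0 = []" and Gt_Suc [simp]: "Gt (Suc k) = X # Y # Gt k"
  by (simp_all add: Gt_def)

lemma pairing_wsh_Nil:
  "pairing f (\<lambda>u. Poly_Mapping.lookup (wsh q u v) []) = (if v = [] then Poly_Mapping.lookup f [] else 0)"
  by (subst pairing_first_letter) (simp add: lookup_wsh_Nil lookup_single when_def)

lemma coeff_CG_Nil: "coeff_CG q h j k [] = (if h = 0 \<and> j = 0 \<and> k = 0 then qint q 1 else 0)"
proof -
  have "Gt k = [] \<longleftrightarrow> k = 0"
    by (cases k) simp_all
  then show ?thesis
    by (simp add: coeff_CG_def lookup_qstar_single pairing_wsh_Nil lookup_catalan_elem_Nil)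
qed

lemma coeff_CYG_Nil: "coeff_CYG q h j k [] = 0"
  by (simp add: coeff_CYG_def lookup_qstar_single pairing_wsh_Nil)

lemma powi_minus_double: "(q::'a::field) powi (- (2 * int h)) = 1 / (q ^ h * q ^ h)"
proof -
  have "- (2 * int h) = - int (h + h)" by simp
  then show ?thesis
    by (simp only: power_int_minus power_int_of_nat power_add divide_inverse mult_1)
qed

lemma powi_double: "(q::'a::field) powi (2 * int h) = q ^ h * q ^ h"
proof -
  have "2 * int h = int (h + h)" by simp
  then show ?thesis
    by (simp only: power_int_of_nat power_add)
qed

lemma coeff_CG_X:
  "coeff_CG q h j k (X # w) =
     (if j > 0 then qint q (int (h + 1)) * coeff_CG q (h + 1) (j - 1) k w else 0)
   + (if k > 0 then 1 / (q ^ h * q ^ h) * coeff_CYG q h j (k - 1) w else 0)"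
  unfolding coeff_CG_def coeff_CYG_def lookup_qstar_single pairing_wsh_Cons
    pairing_catalan_elem_powi_height lquot_X_catalan_elem
  by (cases k) (simp_all add: powi_minus_double add.commute)

lemma coeff_CG_Y:
  "coeff_CG q h j k (Y # w) =
     (if h > 0 then qint q (int (h + 1)) * coeff_CG q (h - 1) j k w else 0)"
  unfolding coeff_CG_def lookup_qstar_single pairing_wsh_Cons lquot_Y_catalan_elem
  by (cases k) (simp_all add: add.commute)

lemma coeff_CYG_X:
  "coeff_CYG q h j k (X # w) =
     (if j > 0 then qint q (int (h + 1)) * coeff_CYG q (h + 1) (j - 1) k w else 0)"
  unfolding coeff_CYG_def lookup_qstar_single pairing_wsh_Cons lquot_X_catalan_elem
  by (simp add: add.commute)

lemma coeff_CYG_Y: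
  "coeff_CYG q h j k (Y # w) =
     (if h > 0 then qint q (int (h + 1)) * coeff_CYG q (h - 1) j k w else 0)
   + q ^ h * q ^ h * coeff_CG q h j k w"
  unfolding coeff_CG_def coeff_CYG_def lookup_qstar_single pairing_wsh_Cons
    pairing_catalan_elem_powi_height lquot_Y_catalan_elem
  by (simp add: powi_double add.commute)

section \<open>q-integers\<close>

lemma q_minus_inverse_nonzero:
  assumes "(q::'a::field) \<noteq> 0" "q * q \<noteq> 1"
  shows "q - inverse q \<noteq> 0"
proof
  assume "q - inverse q = 0"
  then have "q * (q - inverse q) = 0" by simp
  with assms show False by (simp add: algebra_simps)
qed

lemma qint_0 [simp]: "qint q 0 = 0"
  by (simp add: qint_def)

lemma qint_one: "(q::'a::field) \<noteq> 0 \<Longrightarrow> q * q \<noteq> 1 \<Longrightarrow> qint q 1 = 1"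
  using q_minus_inverse_nonzero by (simp add: qint_def power_int_minus)

lemma qint_of_nat_nonzero:
  assumes "(q::'a::field) \<noteq> 0" "\<forall>k::nat. k > 0 \<longrightarrow> q ^ k \<noteq> 1" "m > 0"
  shows "qint q (int m) \<noteq> 0"
proof
  assume "qint q (int m) = 0"
  moreover have "q * q \<noteq> 1"
    using assms(2)[rule_format, of 2] by (simp add: power2_eq_square)
  ultimately have "q ^ m - inverse (q ^ m) = 0"
    using q_minus_inverse_nonzero[OF assms(1)] by (simp add: qint_def power_int_minus)
  then have "q ^ m * (q ^ m - inverse (q ^ m)) = 0" by simp
  then have "q ^ (m + m) = 1"
    using assms(1) by (simp add: algebra_simps power_add)
  then show False
    using assms(2,3) by auto
qed

text \<open>With q * q - 1 named by an opaque d, field_simps clears all denominators of the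
  q-integer identities below; d is unfolded only in the resulting polynomial identity.\<close>

lemma qint_of_nat_eq:
  assumes "(q::'a::field) \<noteq> 0" "d = q * q - 1" "d \<noteq> 0"
  shows "qint q (int n) = (q ^ n * q ^ n - 1) * q / (d * q ^ n)"
proof -
  have "q - inverse q = d / q"
    using assms by (simp add: field_simps)
  then have "qint q (int n) = (q ^ n - inverse (q ^ n)) * q / d"
    using assms by (simp add: qint_def power_int_minus)
  then show ?thesis
    using assms(1,3) by (simp add: field_simps)
qed

section \<open>Alternating combinations of coefficients\<close>

definition coeff_comb :: "'a::field \<Rightarrow> nat \<Rightarrow> nat \<Rightarrow> (nat \<Rightarrow> 'a) \<Rightarrow> (nat \<Rightarrow> 'a) \<Rightarrow> word \<Rightarrow> 'a" where
  "coeff_comb q H M A B w = (\<Sum>j\<le>M. (-1) ^ j * (A j * coeff_CG q H j (M - j) w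
      + (if H = 0 then 0 else B j * coeff_CYG q (H - 1) j (M - j) w)))"

lemma coeff_comb_lincomb:
  assumes "\<And>j. e * A j = c1 * A1 j + c2 * A2 j" "\<And>j. e * B j = c1 * B1 j + c2 * B2 j"
  shows "e * coeff_comb q H M A B w = c1 * coeff_comb q H M A1 B1 w + c2 * coeff_comb q H M A2 B2 w"
proof -
  have "e * ((-1) ^ j * (A j * F + (if H = 0 then 0 else B j * E))) =
      c1 * ((-1) ^ j * (A1 j * F + (if H = 0 then 0 else B1 j * E)))
    + c2 * ((-1) ^ j * (A2 j * F + (if H = 0 then 0 else B2 j * E)))" for j F E
  proof -
    have "e * ((-1) ^ j * (A j * F + (if H = 0 then 0 else B j * E))) =
        (-1) ^ j * ((e * A j) * F + (if H = 0 then 0 else (e * B j) * E))"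
      by (simp add: algebra_simps)
    then show ?thesis
      unfolding assms by (simp add: algebra_simps)
  qed
  then show ?thesis
    unfolding coeff_comb_def by (simp add: sum_distrib_left sum.distrib)
qed

lemma coeff_comb_scale:
  assumes "\<And>j. A j = c * A1 j" "\<And>j. B j = c * B1 j"
  shows "coeff_comb q H M A B w = c * coeff_comb q H M A1 B1 w"
  using coeff_comb_lincomb[of 1 A c A1 0 A1 B B1 B1] assms by simp

lemma coeff_comb_Nil: "coeff_comb q H M A B [] = (if H = 0 \<and> M = 0 then A 0 * qint q 1 else 0)"
  by (cases M) (auto simp: coeff_comb_def coeff_CG_Nil coeff_CYG_Nil intro!: sum.neutral)

lemma coeff_comb_X_0: "coeff_comb q H 0 A B (X # w) = 0"
  unfolding coeff_comb_def atMost_0 by (simp add: coeff_CG_X coeff_CYG_X)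

lemma coeff_comb_Y_0: "coeff_comb q 0 M A B (Y # w) = 0"
  by (simp add: coeff_comb_def coeff_CG_Y)

lemma coeff_comb_Y_Suc:
  "coeff_comb q (Suc H) M A B (Y # w) =
     coeff_comb q H M (\<lambda>j. qint q (int (H + 2)) * A j + q ^ H * q ^ H * B j)
       (\<lambda>j. qint q (int (H + 1)) * B j) w"
  unfolding coeff_comb_def
proof (rule sum.cong)
  fix j
  show "(-1) ^ j * (A j * coeff_CG q (Suc H) j (M - j) (Y # w)
        + (if Suc H = 0 then 0 else B j * coeff_CYG q (Suc H - 1) j (M - j) (Y # w)))
      = (-1) ^ j * ((qint q (int (H + 2)) * A j + q ^ H * q ^ H * B j) * coeff_CG q H j (M - j) w
        + (if H = 0 then 0 else qint q (int (H + 1)) * B j * coeff_CYG q (H - 1) j (M - j) w))"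
    by (cases H) (simp_all add: coeff_CG_Y coeff_CYG_Y ring_distribs mult.assoc)
qed simp

lemma coeff_comb_X_Suc:
  "coeff_comb q H (Suc M) A B (X # w) =
     coeff_comb q (H + 1) M (\<lambda>j. - qint q (int (H + 1)) * A (Suc j))
       (\<lambda>j. 1 / (q ^ H * q ^ H) * A j - qint q (int H) * B (Suc j)) w"
proof -
  define g1 where "g1 j = (if j > 0 then (-1) ^ j * A j * qint q (int (H + 1))
      * coeff_CG q (H + 1) (j - 1) (Suc M - j) w else 0)" for j
  define g2 where "g2 j = (if j < Suc M then (-1) ^ j * A j * (1 / (q ^ H * q ^ H))
      * coeff_CYG q H j (M - j) w else 0)" for j
  define g3 where "g3 j = (if j > 0 then (-1) ^ j * B j * qint q (int H)
      * coeff_CYG q H (j - 1) (Suc M - j) w else 0)" for j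
  have "coeff_comb q H (Suc M) A B (X # w) = (\<Sum>j\<le>Suc M. g1 j + g2 j + g3 j)"
    unfolding coeff_comb_def
    by (intro sum.cong) (auto simp: g1_def g2_def g3_def coeff_CG_X coeff_CYG_X algebra_simps
        Suc_diff_le gr0_conv_Suc)
  also have "\<dots> = (\<Sum>j\<le>Suc M. g1 j) + (\<Sum>j\<le>Suc M. g2 j) + (\<Sum>j\<le>Suc M. g3 j)"
    by (simp add: sum.distrib)
  also have "\<dots> = (\<Sum>j\<le>M. g1 (Suc j)) + (\<Sum>j\<le>M. g2 j) + (\<Sum>j\<le>M. g3 (Suc j))"
    unfolding sum.atMost_Suc_shift[of g1] sum.atMost_Suc_shift[of g3]
    by (simp add: g1_def g2_def g3_def)
  also have "\<dots> = coeff_comb q (H + 1) M (\<lambda>j. - qint q (int (H + 1)) * A (Suc j))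
       (\<lambda>j. 1 / (q ^ H * q ^ H) * A j - qint q (int H) * B (Suc j)) w"
    unfolding coeff_comb_def sum.distrib[symmetric]
    by (intro sum.cong) (auto simp: g1_def g2_def g3_def algebra_simps Suc_diff_le)
  finally show ?thesis .
qed

text \<open>As Laurent polynomials: main_cG = [H+1] q^(H+2M-j) - q^(j-2M),
  main_cYG = -[H+1] q^(2M+2-j), aux_cG = [H] q^(H+j-1) and aux_cYG = -[H+1] q^j.\<close>

definition main_cG :: "'a::field \<Rightarrow> nat \<Rightarrow> nat \<Rightarrow> nat \<Rightarrow> 'a" where
  "main_cG q H M j = qint q (int (H + 1)) * (q ^ H * q ^ M * q ^ M / q ^ j) - q ^ j / (q ^ M * q ^ M)"

definition main_cYG :: "'a::field \<Rightarrow> nat \<Rightarrow> nat \<Rightarrow> nat \<Rightarrow> 'a" where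
  "main_cYG q H M j = - qint q (int (H + 1)) * (q ^ M * q ^ M * q * q / q ^ j)"

definition aux_cG :: "'a::field \<Rightarrow> nat \<Rightarrow> nat \<Rightarrow> 'a" where
  "aux_cG q H j = q ^ j * q ^ H / q * qint q (int H)"

definition aux_cYG :: "'a::field \<Rightarrow> nat \<Rightarrow> nat \<Rightarrow> 'a" where
  "aux_cYG q H j = - (q ^ j) * qint q (int (H + 1))"

lemma coeff_comb_main_Y_step:
  assumes "(q::'a::field) \<noteq> 0" "q * q \<noteq> 1"
  shows "coeff_comb q (Suc H) M (main_cG q (Suc H) M) (main_cYG q (Suc H) M) (Y # w) =
    qint q (int (H + 2)) * coeff_comb q H M (main_cG q H M) (main_cYG q H M) w"
proof -
  define d where "d = q * q - 1"
  have "d \<noteq> 0" using assms(2) by (simp add: d_def)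
  note qint = qint_of_nat_eq[OF assms(1) d_def this]
  show ?thesis
    unfolding coeff_comb_Y_Suc
  proof (rule coeff_comb_scale)
    fix j
    show "qint q (int (H + 2)) * main_cG q (Suc H) M j + q ^ H * q ^ H * main_cYG q (Suc H) M j = qint q (int (H + 2)) * main_cG q H M j"
      unfolding main_cG_def main_cYG_def qint using \<open>d \<noteq> 0\<close> assms(1)
      by (simp add: field_simps; simp add: d_def algebra_simps)
  next
    fix j
    show "qint q (int (H + 1)) * main_cYG q (Suc H) M j = qint q (int (H + 2)) * main_cYG q H M j"
      by (simp add: main_cYG_def)
  qed
qed

lemma coeff_comb_aux_Y_step:
  assumes "(q::'a::field) \<noteq> 0" "q * q \<noteq> 1"
  shows "coeff_comb q (Suc H) M (aux_cG q (Suc H)) (aux_cYG q (Suc H)) (Y # w) =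
    qint q (int (H + 2)) * coeff_comb q H M (aux_cG q H) (aux_cYG q H) w"
proof -
  define d where "d = q * q - 1"
  have "d \<noteq> 0" using assms(2) by (simp add: d_def)
  note qint = qint_of_nat_eq[OF assms(1) d_def this]
  show ?thesis
    unfolding coeff_comb_Y_Suc
  proof (rule coeff_comb_scale)
    fix j
    show "qint q (int (H + 2)) * aux_cG q (Suc H) j + q ^ H * q ^ H * aux_cYG q (Suc H) j
        = qint q (int (H + 2)) * aux_cG q H j"
      unfolding aux_cG_def aux_cYG_def qint using \<open>d \<noteq> 0\<close> assms(1)
      by (simp add: field_simps; simp add: d_def algebra_simps)
  next
    fix j
    show "qint q (int (H + 1)) * aux_cYG q (Suc H) j = qint q (int (H + 2)) * aux_cYG q H j"
      by (simp add: aux_cYG_def)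
  qed
qed

lemma coeff_comb_aux_X_step:
  assumes "(q::'a::field) \<noteq> 0" "q * q \<noteq> 1"
  shows "coeff_comb q H (Suc M) (aux_cG q H) (aux_cYG q H) (X # w) =
    - qint q (int H) * coeff_comb q (H + 1) M (aux_cG q (H + 1)) (aux_cYG q (H + 1)) w"
proof -
  define d where "d = q * q - 1"
  have "d \<noteq> 0" using assms(2) by (simp add: d_def)
  note qint = qint_of_nat_eq[OF assms(1) d_def this]
  show ?thesis
    unfolding coeff_comb_X_Suc
  proof (rule coeff_comb_scale)
    fix j
    show "- qint q (int (H + 1)) * aux_cG q H (Suc j) = - qint q (int H) * aux_cG q (H + 1) j"
      by (simp add: aux_cG_def)
  next
    fix j
    show "1 / (q ^ H * q ^ H) * aux_cG q H j - qint q (int H) * aux_cYG q H (Suc j)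
        = - qint q (int H) * aux_cYG q (H + 1) j"
      unfolding aux_cG_def aux_cYG_def qint using \<open>d \<noteq> 0\<close> assms(1)
      by (simp add: field_simps; simp add: d_def algebra_simps)
  qed
qed

lemma coeff_comb_main_X_step:
  assumes "(q::'a::field) \<noteq> 0" "q * q \<noteq> 1"
  shows "qint q (int (H + 2)) * coeff_comb q H (Suc M) (main_cG q H (Suc M)) (main_cYG q H (Suc M)) (X # w) =
    - (qint q (int (H + 1)) * qint q (int (H + 1)))
      * coeff_comb q (H + 1) M (main_cG q (H + 1) M) (main_cYG q (H + 1) M) w
    + 1 / (q ^ M * q ^ M * q * q * q ^ H * q ^ H)
      * coeff_comb q (H + 1) M (aux_cG q (H + 1)) (aux_cYG q (H + 1)) w"
proof -
  define d where "d = q * q - 1"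
  have "d \<noteq> 0" using assms(2) by (simp add: d_def)
  note qint = qint_of_nat_eq[OF assms(1) d_def this]
  show ?thesis
    unfolding coeff_comb_X_Suc
  proof (rule coeff_comb_lincomb)
    fix j
    show "qint q (int (H + 2)) * (- qint q (int (H + 1)) * main_cG q H (Suc M) (Suc j))
        = - (qint q (int (H + 1)) * qint q (int (H + 1))) * main_cG q (H + 1) M j
          + 1 / (q ^ M * q ^ M * q * q * q ^ H * q ^ H) * aux_cG q (H + 1) j"
      unfolding main_cG_def aux_cG_def qint using \<open>d \<noteq> 0\<close> assms(1)
      by (simp add: field_simps; simp add: d_def algebra_simps)
  next
    fix j
    show "qint q (int (H + 2)) * (1 / (q ^ H * q ^ H) * main_cG q H (Suc M) j
          - qint q (int H) * main_cYG q H (Suc M) (Suc j))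
        = - (qint q (int (H + 1)) * qint q (int (H + 1))) * main_cYG q (H + 1) M j
          + 1 / (q ^ M * q ^ M * q * q * q ^ H * q ^ H) * aux_cYG q (H + 1) j"
      unfolding main_cG_def main_cYG_def aux_cYG_def qint using \<open>d \<noteq> 0\<close> assms(1)
      by (simp add: field_simps; simp add: d_def algebra_simps)
  qed
qed

lemma coeff_comb_vanish:
  assumes "(q::'a::field) \<noteq> 0" "\<forall>k::nat. k > 0 \<longrightarrow> q ^ k \<noteq> 1"
  shows "coeff_comb q H M (main_cG q H M) (main_cYG q H M) w = 0
       \<and> coeff_comb q H M (aux_cG q H) (aux_cYG q H) w = 0"
proof -
  have qq: "q * q \<noteq> 1"
    using assms(2)[rule_format, of 2] by (simp add: power2_eq_square)
  show ?thesis
  proof (induction w arbitrary: H M)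
    case Nil
    show ?case
      by (simp add: coeff_comb_Nil main_cG_def aux_cG_def qint_one[OF assms(1) qq])
  next
    case (Cons a w)
    show ?case
    proof (cases a)
      case X
      show ?thesis
      proof (cases M)
        case (Suc M')
        have "qint q (int (H + 2)) \<noteq> 0"
          using qint_of_nat_nonzero[OF assms, of "H + 2"] by simp
        then show ?thesis
          using X Suc Cons.IH coeff_comb_main_X_step[OF assms(1) qq, of H M' w]
            coeff_comb_aux_X_step[OF assms(1) qq, of H M' w] by simp
      qed (simp add: X coeff_comb_X_0)
    next
      case Y
      show ?thesis
      proof (cases H)
        case (Suc H')
        then show ?thesis
          using Y Cons.IH coeff_comb_main_Y_step[OF assms(1) qq, of H' M w]
            coeff_comb_aux_Y_step[OF assms(1) qq, of H' M w] by simp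
      qed (simp add: Y coeff_comb_Y_0)
    qed
  qed
qed

lemma main_cG_0:
  assumes "(q::'a::field) \<noteq> 0" "q * q \<noteq> 1" "j \<le> n"
  shows "main_cG q 0 n j = (q - inverse q) * qint q (2 * int n - int j)"
proof -
  define r where "r = n + n - j"
  have "2 * int n - int j = int r" "q ^ n * q ^ n = q ^ r * q ^ j"
    using assms(3) by (simp_all add: r_def flip: power_add)
  then show ?thesis
    using assms(1,2) q_minus_inverse_nonzero[OF assms(1,2)]
    by (simp add: main_cG_def qint_one qint_def power_int_minus field_simps)
qed

theorem theorem11p14:
  fixes q :: "'a::field" and n :: nat
  assumes "q \<noteq> 0"
    and "\<forall>k::nat. k > 0 \<longrightarrow> q ^ k \<noteq> 1"
  shows "(\<Sum>i\<in>{0..n}. smul ((-1) ^ i * qint q (2 * int n - int i))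
            (qstar q (Cn q i) (Poly_Mapping.single (Gt (n - i)) 1))) = 0"
proof (rule poly_mapping_eqI)
  fix w
  have "q * q \<noteq> 1"
    using assms(2)[rule_format, of 2] by (simp add: power2_eq_square)
  have "Poly_Mapping.lookup (\<Sum>i\<in>{0..n}. smul ((-1) ^ i * qint q (2 * int n - int i))
          (qstar q (Cn q i) (Poly_Mapping.single (Gt (n - i)) 1))) w
      = (\<Sum>i\<le>n. (-1) ^ i * qint q (2 * int n - int i) * coeff_CG q 0 i (n - i) w)"
    by (simp add: lookup_sum coeff_CG_def Cn_eq_catalan_elem atLeast0AtMost)
  also have "\<dots> = inverse (q - inverse q) * coeff_comb q 0 n (main_cG q 0 n) (main_cYG q 0 n) w"
    unfolding coeff_comb_def sum_distrib_left
    using main_cG_0[OF assms(1) \<open>q * q \<noteq> 1\<close>] q_minus_inverse_nonzero[OF assms(1) \<open>q * q \<noteq> 1\<close>]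
    by (intro sum.cong) simp_all
  also have "\<dots> = 0"
    using coeff_comb_vanish[OF assms] by simp
  finally show "Poly_Mapping.lookup (\<Sum>i\<in>{0..n}. smul ((-1) ^ i * qint q (2 * int n - int i))
      (qstar q (Cn q i) (Poly_Mapping.single (Gt (n - i)) 1))) w = Poly_Mapping.lookup 0 w"
    by simp
qed

end
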